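(* Assume the payoffs are normalized so that $T=1$, $S=0$ (hence $1>R>\tfrac12$ and $R>P>0$), and let $\bar\alpha>0$. Put $\bar\beta=-\bar\alpha-R^{-1}$. Among all memory-one strategies $\mathbf p\in[0,1]^4$ whose X Press-Dyson vector has the form $\mathbf p-(1,1,0,0)=\gamma(\bar\alpha\mathbf S_X+\bar\beta\mathbf S_Y+\mathbf 1)$ with $\gamma>0$, the one with the largest $\gamma$ (the associated agreeable zero-determinant top strategy) is $$\mathbf p=\Big(1,\ \frac{2R-1}{R(\bar\alpha+1)},\ 1,\ \frac{R-P}{R(\bar\alpha+1)}\Big).$$
   Context: Iterated Prisoner's Dilemma with normalized payoffs $T=1>R>P>S=0$ and $2R>1$; outcomes ordered $cc,cd,dc,dd$ (first letter X's play, second Y's); payoff vectors $\mathbf S_X=(R,0,1,P)$, $\mathbf S_Y=(R,1,0,P)$, $\mathbf 1=(1,1,1,1)$. A memory-one strategy for X is $\mathbf p=(p_1,\dots,p_4)\in[0,1]^4$, $p_i$ being the probability X plays $c$ after outcome $i$ of the previous round; its X Press-Dyson vector is $\tilde{\mathbf p}=\mathbf p-(1,1,0,0)$. *)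

theory Defs
  imports "HOL-Analysis.Analysis"
begin

text \<open>Outcomes ordered cc, cd, dc, dd; vectors in real^4 with components 1..4.\<close>

definition SX :: "real \<Rightarrow> real \<Rightarrow> real^4" where
  "SX R P = vector [R, 0, 1, P]"

definition SY :: "real \<Rightarrow> real \<Rightarrow> real^4" where
  "SY R P = vector [R, 1, 0, P]"

definition one4 :: "real^4" where
  "one4 = vector [1, 1, 1, 1]"

definition memory_one :: "real^4 \<Rightarrow> bool" where
  "memory_one p \<longleftrightarrow> (\<forall>i. 0 \<le> p $ i \<and> p $ i \<le> 1)"

definition PD_X :: "real^4 \<Rightarrow> real^4" where
  "PD_X p = p - vector [1, 1, 0, 0]"

end

theory Submission
  imports Defs
begin

text \<open>
  The direction \<alpha> S_X + \<beta> S_Y + 1 has third entry \<alpha> + 1, and the third entry of the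
  X Press-Dyson vector is p_3 itself.  Hence p_3 = \<gamma>(\<alpha> + 1) \<le> 1 bounds \<gamma> by 1/(\<alpha> + 1);
  at that value p_3 = 1, and since p \<mapsto> p - (1,1,0,0) is injective, \<gamma> determines p.
  With \<beta> = -\<alpha> - 1/R the first entry vanishes, so p_1 = 1 as well, and the remaining
  entries of the extremal p lie in [0,1] because 1/2 < R < 1 and 0 < P < R.
\<close>

lemma vector4_nth [simp]:
  "vector [a, b, c, d] $ (1::4) = a" "vector [a, b, c, d] $ (2::4) = b"
  "vector [a, b, c, d] $ (3::4) = c" "vector [a, b, c, d] $ (4::4) = d"
  by (simp_all add: vector_def)

lemma vec4_eq_iff:
  "(x::real^4) = y \<longleftrightarrow> x$1 = y$1 \<and> x$2 = y$2 \<and> x$3 = y$3 \<and> x$4 = y$4"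
  by (simp add: vec_eq_iff forall_4)

lemma memory_one_vector4:
  "memory_one (vector [a, b, c, d]) \<longleftrightarrow>
     a \<in> {0..1} \<and> b \<in> {0..1} \<and> c \<in> {0..1} \<and> d \<in> {0..1}"
  by (auto simp: memory_one_def forall_4)

lemma PD_X_eq_iff: "PD_X p = PD_X q \<longleftrightarrow> p = q"
  by (simp add: PD_X_def)

lemma PD_X_nth3: "PD_X p $ 3 = p $ 3"
  by (simp add: PD_X_def)

lemma ZD_direction:
  "\<alpha> *\<^sub>R SX R P + \<beta> *\<^sub>R SY R P + one4 =
     vector [(\<alpha> + \<beta>) * R + 1, \<beta> + 1, \<alpha> + 1, (\<alpha> + \<beta>) * P + 1]"
  by (simp add: vec4_eq_iff SX_def SY_def one4_def algebra_simps)

lemma ZD_scale_bound: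
  assumes "memory_one p"
    and "PD_X p = \<gamma> *\<^sub>R (\<alpha> *\<^sub>R SX R P + \<beta> *\<^sub>R SY R P + one4)"
  shows "\<gamma> * (\<alpha> + 1) \<le> 1"
proof -
  have "p $ 3 = \<gamma> * (\<alpha> + 1)"
    using arg_cong[OF assms(2), of "\<lambda>v. v $ 3"] by (simp add: PD_X_nth3 ZD_direction)
  with assms(1) show ?thesis
    unfolding memory_one_def by metis
qed

lemma agreeable_top_PD_X:
  assumes "R \<noteq> 0" "\<alpha> + 1 \<noteq> 0"
  shows "PD_X (vector [1, (2*R - 1) / (R * (\<alpha> + 1)), 1, (R - P) / (R * (\<alpha> + 1))]) =
    (1 / (\<alpha> + 1)) *\<^sub>R (\<alpha> *\<^sub>R SX R P + (- \<alpha> - 1 / R) *\<^sub>R SY R P + one4)"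
proof -
  have "R * (\<alpha> + 1) \<noteq> 0"
    using assms by simp
  then show ?thesis
    unfolding ZD_direction using assms by (simp add: vec4_eq_iff PD_X_def field_simps)
qed

lemma agreeable_top_memory_one:
  fixes R P \<alpha> :: real
  assumes "R < 1" "2 * R > 1" "P < R" "0 < P" "\<alpha> > 0"
  shows "memory_one (vector [1, (2*R - 1) / (R * (\<alpha> + 1)), 1, (R - P) / (R * (\<alpha> + 1))])"
proof -
  have denom_pos: "R * (\<alpha> + 1) > 0"
    using assms by simp
  have "R * \<alpha> > 0"
    using assms by simp
  then have "2*R - 1 \<le> R * (\<alpha> + 1)" "R - P \<le> R * (\<alpha> + 1)"
    using assms unfolding distrib_left by linarith+
  with denom_pos assms show ?thesis
    by (simp add: memory_one_vector4 divide_le_eq)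
qed

theorem proposition2p6:
  fixes R P \<alpha> :: real
  assumes "R < 1" "2 * R > 1" "P < R" "0 < P" "\<alpha> > 0"
  defines "\<beta> \<equiv> - \<alpha> - 1 / R"
  defines "p0 \<equiv> vector [1, (2*R - 1) / (R * (\<alpha> + 1)), 1, (R - P) / (R * (\<alpha> + 1))] :: real^4"
  shows "memory_one p0 \<and>
    (\<exists>\<gamma>>0. PD_X p0 = \<gamma> *\<^sub>R (\<alpha> *\<^sub>R SX R P + \<beta> *\<^sub>R SY R P + one4) \<and>
      (\<forall>p \<gamma>'. memory_one p \<and> \<gamma>' > 0 \<and>
          PD_X p = \<gamma>' *\<^sub>R (\<alpha> *\<^sub>R SX R P + \<beta> *\<^sub>R SY R P + one4)
        \<longrightarrow> \<gamma>' \<le> \<gamma> \<and> (\<gamma>' = \<gamma> \<longrightarrow> p = p0)))"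
proof -
  have top: "PD_X p0 = (1 / (\<alpha> + 1)) *\<^sub>R (\<alpha> *\<^sub>R SX R P + \<beta> *\<^sub>R SY R P + one4)"
    unfolding p0_def \<beta>_def using assms by (intro agreeable_top_PD_X) auto
  have "\<gamma>' \<le> 1 / (\<alpha> + 1) \<and> (\<gamma>' = 1 / (\<alpha> + 1) \<longrightarrow> p = p0)"
    if "memory_one p" "PD_X p = \<gamma>' *\<^sub>R (\<alpha> *\<^sub>R SX R P + \<beta> *\<^sub>R SY R P + one4)" for p \<gamma>'
  proof -
    have "\<gamma>' * (\<alpha> + 1) \<le> 1"
      using ZD_scale_bound[OF that] .
    moreover have "\<gamma>' = 1 / (\<alpha> + 1) \<Longrightarrow> p = p0"
      using that(2) top PD_X_eq_iff by metis
    ultimately show ?thesis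
      using assms(5) by (simp add: le_divide_eq)
  qed
  moreover have "1 / (\<alpha> + 1) > 0"
    using assms(5) by simp
  ultimately show ?thesis
    using top agreeable_top_memory_one[OF assms(1-5)] unfolding p0_def by blast
qed

end
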